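(* Let $b$ be a Boolean expression, $C$ a HeyVL statement, $I$ an expectation, $\vec v$ a list of variables, and for an expectation $J$ let $\mathrm{Park}(b,C,J)$ be the HeyVL program $\mathtt{assert}\ J$ [labelled (1)]; $\mathtt{havoc}\ \vec v$; $\mathtt{validate}$; $\mathtt{assume}\ J$ [labelled (I)]; $\mathtt{if}\ b\ \{\ C;\ \mathtt{assert}\ J$ [labelled (2)]$;\ \mathtt{assume}\ ?(\mathsf{false})$ [labelled (II)] $\}\ \mathtt{else}\ \{\}$. Let $S=\mathrm{Park}(b,C,I)$, let $X,Y$ be expectations, and let $S'$ be obtained from $S$ by removing any subset of the assumptions (I) and (II), such that $\models\{X\}S'\{Y\}$. Then: (1) If $S'$ does not include (I), then $\models\{X\}\,\mathrm{Park}(b,C,\infty)\,\{Y\}$. (2) If $S'$ does not include (II), then $\models\{X\}\,\mathtt{if}\ b\ \{C\}\ \mathtt{else}\ \{\}\,\{Y\}$.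
   Context: Expectations are functions from program states to $[0,\infty]$, ordered pointwise by $\preceq$. $?(b)$ is the expectation equal to $\infty$ where $b$ holds and $0$ elsewhere. HeyVL statements and verification pre-expectation transformer $\mathrm{vp}$ (monotone in its argument): $x :\approx \sum_i p_i\cdot t_i$: $\sum_i p_i X[x/t_i]$; $\mathtt{reward}\ a$: $X+a$; $S_1;S_2$: $\mathrm{vp}[S_1](\mathrm{vp}[S_2](X))$; $\mathtt{if}(\sqcap)/\mathtt{if}(\sqcup)\{S_1\}\mathtt{else}\{S_2\}$: pointwise min/max of branch values; $\mathtt{assert}\ Y$: $\min(Y,X)$; $\mathtt{coassert}\ Y$: $\max(Y,X)$; $\mathtt{assume}\ Y$: $\infty$ where $Y\le X$, else $X$; $\mathtt{coassume}\ Y$: $0$ where $Y\ge X$, else $X$; $\mathtt{havoc}\ \vec v$/$\mathtt{cohavoc}\ \vec v$: pointwise inf/sup over values of $\vec v$; $\mathtt{validate}$: $\infty$ where $X=\infty$, else $0$; $\mathtt{covalidate}$: $0$ where $X=0$, else $\infty$. The conditional $\mathtt{if}\ b\{S_1\}\mathtt{else}\{S_2\}$ abbreviates $\mathtt{if}(\sqcap)\{\mathtt{assume}\ ?(b);S_1\}\mathtt{else}\{\mathtt{assume}\ ?(\neg b);S_2\}$. Removing a statement means replacing it by $\mathtt{skip}$, $\mathrm{vp}[\mathtt{skip}](X)=X$. Write $\models\{A\}S\{B\}$ iff $A\preceq\mathrm{vp}[S](B)$. *)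

theory Defs
  imports "HOL-Library.Extended_Nonnegative_Real"
begin

type_synonym ('x, 'v) state = "'x \<Rightarrow> 'v"
type_synonym ('x, 'v) expect = "('x, 'v) state \<Rightarrow> ennreal"

datatype ('x, 'v) heyvl =
    Skip
  | Assign 'x "(ennreal \<times> (('x, 'v) state \<Rightarrow> 'v)) list"  \<comment> \<open>x :~ sum_i p_i * t_i\<close>
  | Reward "('x, 'v) expect"
  | Seq "('x, 'v) heyvl" "('x, 'v) heyvl"
  | DemIf "('x, 'v) heyvl" "('x, 'v) heyvl"
  | AngIf "('x, 'v) heyvl" "('x, 'v) heyvl"
  | Assert "('x, 'v) expect"
  | Coassert "('x, 'v) expect"
  | Assume "('x, 'v) expect"
  | Coassume "('x, 'v) expect"
  | Havoc "'x list"
  | Cohavoc "'x list"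
  | Validate
  | Covalidate

fun vp :: "('x, 'v) heyvl \<Rightarrow> ('x, 'v) expect \<Rightarrow> ('x, 'v) expect" where
  "vp Skip X = X"
| "vp (Assign x ds) X = (\<lambda>\<sigma>. (\<Sum>(p, t)\<leftarrow>ds. p * X (\<sigma>(x := t \<sigma>))))"
| "vp (Reward a) X = (\<lambda>\<sigma>. X \<sigma> + a \<sigma>)"
| "vp (Seq S1 S2) X = vp S1 (vp S2 X)"
| "vp (DemIf S1 S2) X = (\<lambda>\<sigma>. min (vp S1 X \<sigma>) (vp S2 X \<sigma>))"
| "vp (AngIf S1 S2) X = (\<lambda>\<sigma>. max (vp S1 X \<sigma>) (vp S2 X \<sigma>))"
| "vp (Assert Y) X = (\<lambda>\<sigma>. min (Y \<sigma>) (X \<sigma>))"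
| "vp (Coassert Y) X = (\<lambda>\<sigma>. max (Y \<sigma>) (X \<sigma>))"
| "vp (Assume Y) X = (\<lambda>\<sigma>. if Y \<sigma> \<le> X \<sigma> then \<infinity> else X \<sigma>)"
| "vp (Coassume Y) X = (\<lambda>\<sigma>. if X \<sigma> \<le> Y \<sigma> then 0 else X \<sigma>)"
| "vp (Havoc vs) X = (\<lambda>\<sigma>. INF \<tau>\<in>{\<tau>. \<forall>y. y \<notin> set vs \<longrightarrow> \<tau> y = \<sigma> y}. X \<tau>)"
| "vp (Cohavoc vs) X = (\<lambda>\<sigma>. SUP \<tau>\<in>{\<tau>. \<forall>y. y \<notin> set vs \<longrightarrow> \<tau> y = \<sigma> y}. X \<tau>)"
| "vp Validate X = (\<lambda>\<sigma>. if X \<sigma> = \<infinity> then \<infinity> else 0)"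
| "vp Covalidate X = (\<lambda>\<sigma>. if X \<sigma> = 0 then 0 else \<infinity>)"

definition iverson :: "(('x, 'v) state \<Rightarrow> bool) \<Rightarrow> ('x, 'v) expect" where
  "iverson b = (\<lambda>\<sigma>. if b \<sigma> then \<infinity> else 0)"

definition Cond :: "(('x, 'v) state \<Rightarrow> bool) \<Rightarrow> ('x, 'v) heyvl \<Rightarrow> ('x, 'v) heyvl \<Rightarrow> ('x, 'v) heyvl" where
  "Cond b S1 S2 = DemIf (Seq (Assume (iverson b)) S1) (Seq (Assume (iverson (\<lambda>\<sigma>. \<not> b \<sigma>))) S2)"

definition valid :: "('x, 'v) expect \<Rightarrow> ('x, 'v) heyvl \<Rightarrow> ('x, 'v) expect \<Rightarrow> bool" where
  "valid A S B \<longleftrightarrow> A \<le> vp S B"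

text \<open>Park(b,C,J) where the flags keepI / keepII tell whether the assumptions
labelled (I) and (II) are kept (True) or removed, i.e. replaced by skip (False).\<close>
definition park_gen :: "bool \<Rightarrow> bool \<Rightarrow> (('x, 'v) state \<Rightarrow> bool) \<Rightarrow> ('x, 'v) heyvl
    \<Rightarrow> ('x, 'v) expect \<Rightarrow> 'x list \<Rightarrow> ('x, 'v) heyvl" where
  "park_gen keepI keepII b C J vs =
     Seq (Assert J)
    (Seq (Havoc vs)
    (Seq Validate
    (Seq (if keepI then Assume J else Skip)
         (Cond b (Seq C (Seq (Assert J)
                   (if keepII then Assume (iverson (\<lambda>_. False)) else Skip))) Skip))))"

definition park :: "(('x, 'v) state \<Rightarrow> bool) \<Rightarrow> ('x, 'v) heyvl
    \<Rightarrow> ('x, 'v) expect \<Rightarrow> 'x list \<Rightarrow> ('x, 'v) heyvl" where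
  "park b C J vs = park_gen True True b C J vs"

end

theory Submission
  imports Defs
begin

text \<open>Both weakenings are monotonicity arguments for \<open>vp\<close>. Since \<open>assume ?(false)\<close> maps
every post-expectation to \<open>\<infinity>\<close>, in \<open>Park(b,C,\<infinity>)\<close> the loop body evaluates to \<open>vp C \<infinity>\<close>
and the assertion and assumption of \<open>\<infinity>\<close> are no-ops, so it dominates any variant of
\<open>Park(b,C,I)\<close> without (I). Without (II), at a state where \<open>X\<close> is nonzero the
\<open>validate\<close> after \<open>havoc\<close> (instantiated at the current state) forces the remainder to be
\<open>\<infinity>\<close>; with (I) this means \<open>I\<close> lies below the conditional, and \<open>X \<le> I\<close> by the initial
assertion. The remaining \<open>assert I\<close> after \<open>C\<close> can only decrease the value.\<close>

lemma vp_mono: "X \<le> X' \<Longrightarrow> vp S X \<le> vp S X'"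
proof (induction S arbitrary: X X')
  case (Assign x ds)
  then show ?case
    by (auto simp: le_fun_def intro!: sum_list_mono mult_left_mono)
next
  case (DemIf S1 S2)
  then have "vp S1 X \<le> vp S1 X'" "vp S2 X \<le> vp S2 X'" by auto
  then show ?case by (auto simp: le_fun_def intro: min.coboundedI1 min.coboundedI2)
next
  case (AngIf S1 S2)
  then have "vp S1 X \<le> vp S1 X'" "vp S2 X \<le> vp S2 X'" by auto
  then show ?case by (auto simp: le_fun_def intro: max.coboundedI1 max.coboundedI2)
next
  case (Assert Y)
  then show ?case by (auto simp: le_fun_def intro: min.coboundedI2)
next
  case (Havoc vs)
  then show ?case by (auto simp: le_fun_def intro!: INF_mono)
next
  case (Cohavoc vs)
  then show ?case by (auto simp: le_fun_def intro!: SUP_mono)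
next
  case Validate
  then show ?case by (auto simp: le_fun_def) (metis top.extremum_unique)
next
  case Covalidate
  then show ?case by (auto simp: le_fun_def) (metis le_zero_eq)
qed (auto simp: le_fun_def intro: order_trans add_right_mono max.coboundedI2)

lemma vp_Cond: "vp (Cond b S1 S2) X \<sigma> = (if b \<sigma> then vp S1 X \<sigma> else vp S2 X \<sigma>)"
  by (simp add: Cond_def iverson_def top_unique)

lemma vp_Cond_mono: "vp S1 X \<le> vp S2 X \<Longrightarrow> vp (Cond b S1 S) X \<le> vp (Cond b S2 S) X"
  by (simp add: le_fun_def vp_Cond)

lemma vp_Seq_mono: "vp S2 X \<le> vp S2' X \<Longrightarrow> vp (Seq S1 S2) X \<le> vp (Seq S1 S2') X"
  by (simp add: vp_mono)

lemma vp_Assert_top: "vp (Assert (\<lambda>_. \<infinity>)) X = X"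
  by (simp add: fun_eq_iff)

lemma vp_Assume_top: "vp (Assume (\<lambda>_. \<infinity>)) X = X"
  by (simp add: fun_eq_iff top_unique)

lemma vp_Assume_false: "vp (Assume (iverson (\<lambda>_. False))) X = (\<lambda>_. \<infinity>)"
  by (simp add: fun_eq_iff iverson_def)

lemma vp_Havoc_le: "vp (Havoc vs) X \<sigma> \<le> X \<sigma>"
  by (auto intro: INF_lower)

lemma vp_park_gen_without_I_le_park_top:
  "vp (park_gen False keepII b C J vs) Y \<le> vp (park b C (\<lambda>_. \<infinity>) vs) Y"
proof -
  let ?T = "if keepII then Assume (iverson (\<lambda>_. False)) else Skip"
  let ?loop = "Cond b (Seq C (Seq (Assert J) ?T)) Skip"
  let ?loop_top = "Cond b (Seq C (Seq (Assert (\<lambda>_. \<infinity>)) (Assume (iverson (\<lambda>_. False))))) Skip"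
  have "vp (park_gen False keepII b C J vs) Y \<le> vp (Seq (Havoc vs) (Seq Validate ?loop)) Y"
    unfolding park_gen_def by (auto simp: le_fun_def)
  also have "\<dots> \<le> vp (Seq (Havoc vs) (Seq Validate ?loop_top)) Y"
  proof (intro vp_Seq_mono vp_Cond_mono)
    show "vp (Seq (Assert J) ?T) Y \<le> vp (Seq (Assert (\<lambda>_. \<infinity>)) (Assume (iverson (\<lambda>_. False)))) Y"
      by (simp only: vp.simps(4) vp_Assume_false) (simp add: le_fun_def)
  qed
  also have "\<dots> = vp (park b C (\<lambda>_. \<infinity>) vs) Y"
    unfolding park_def park_gen_def by (simp only: if_True vp.simps(4) vp_Assert_top vp_Assume_top)
  finally show ?thesis .
qed

lemma valid_park_gen_without_II_imp_valid_Cond: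
  assumes "valid X (park_gen keepI False b C J vs) Y"
  shows "valid X (Cond b C Skip) Y"
proof -
  let ?loop = "Cond b (Seq C (Seq (Assert J) Skip)) Skip"
  let ?A = "if keepI then Assume J else Skip"
  have "X \<sigma> \<le> vp ?loop Y \<sigma>" for \<sigma>
  proof (cases "X \<sigma> = 0")
    case False
    have X_le: "X \<sigma> \<le> min (J \<sigma>) (vp (Havoc vs) (vp Validate (vp ?A (vp ?loop Y))) \<sigma>)"
      using assms unfolding valid_def park_gen_def le_fun_def vp.simps(4) by simp
    then have "vp Validate (vp ?A (vp ?loop Y)) \<sigma> \<noteq> 0"
      using False vp_Havoc_le by (metis min.bounded_iff le_zero_eq)
    then have "vp ?A (vp ?loop Y) \<sigma> = \<infinity>"
      by (simp split: if_splits)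
    with X_le show ?thesis
      by (cases keepI) (auto split: if_splits intro: order_trans)
  qed simp
  moreover have "vp ?loop Y \<le> vp (Cond b C Skip) Y"
    using vp_mono[of "\<lambda>\<sigma>. min (J \<sigma>) (Y \<sigma>)" Y C] by (intro vp_Cond_mono) (simp add: le_fun_def)
  ultimately show ?thesis
    by (auto simp: valid_def le_fun_def intro: order_trans)
qed

theorem theorem7:
  fixes b :: "('x, 'v) state \<Rightarrow> bool" and C :: "('x, 'v) heyvl"
    and I X Y :: "('x, 'v) expect" and vs :: "'x list"
    and keepI keepII :: bool
  assumes "valid X (park_gen keepI keepII b C I vs) Y"
  shows "(\<not> keepI \<longrightarrow> valid X (park b C (\<lambda>_. \<infinity>) vs) Y)
       \<and> (\<not> keepII \<longrightarrow> valid X (Cond b C Skip) Y)"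
proof (intro conjI impI)
  assume "\<not> keepI"
  then show "valid X (park b C (\<lambda>_. \<infinity>) vs) Y"
    using assms vp_park_gen_without_I_le_park_top[of keepII b C I vs Y]
    by (auto simp: valid_def intro: order_trans)
next
  assume "\<not> keepII"
  then show "valid X (Cond b C Skip) Y"
    using assms by (auto intro: valid_park_gen_without_II_imp_valid_Cond)
qed

end
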